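(* For $m\ge1$, $\widetilde G_{m,1}=G_{m,1}=(-1)^{m-1}/m$, and \[ \sum_{m\ge1}\sum_{n\ge1}\widetilde G_{m,n+1}x^my^n=\frac{y\log(1+x)-x\log(1+y)}{\log(1+x)-\log(1+y)}\left(\frac{y\log(1+x)+x\log(1+y)}{xy}-1\right). \] Consequently $\widetilde G_{m,n}=\widetilde G_{n-1,m+1}$ for all $m\ge1$, $n\ge2$.
   Context: The generalized Gregory coefficients $G_{m,n}$ ($m,n\ge0$) are defined by $\sum_{m,n\ge0}G_{m,n}x^my^n=\dfrac{y\log^2(1+x)-x\log^2(1+y)}{\log(1+x)-\log(1+y)}$ as formal power series, where $\log^k u=(\log u)^k$. For $m,n\ge1$ define $\widetilde G_{m,n}=G_{m,n}+\sum_{j=0}^{m-2}G_{n-1,j+2}\,G_{m-j-1,2}$ (the sum is empty for $m=1$, so $\widetilde G_{1,n}=G_{1,n}$). *)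

theory Defs
  imports "HOL-Computational_Algebra.Formal_Power_Series"
begin

text \<open>Bivariate formal power series over the reals are modelled as \<open>real fps fps\<close>:
  the coefficient of \<open>x^m y^n\<close> in \<open>S\<close> is \<open>fps_nth (fps_nth S m) n\<close> (outer variable x, inner variable y).\<close>

definition bvX :: "real fps fps" where
  "bvX = fps_X"

definition bvY :: "real fps fps" where
  "bvY = fps_const fps_X"

definition logX :: "real fps fps" where
  "logX = Abs_fps (\<lambda>m. fps_const (fps_nth (fps_ln 1) m))"

definition logY :: "real fps fps" where
  "logY = fps_const (fps_ln 1)"

text \<open>Exact quotient of formal power series: the unique \<open>h\<close> with \<open>h * b = a\<close>
  (bivariate series over a field form an integral domain, so it is unique when it exists).\<close>
definition bdiv :: "real fps fps \<Rightarrow> real fps fps \<Rightarrow> real fps fps" where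
  "bdiv a b = (THE h. h * b = a)"

definition Gser :: "real fps fps" where
  "Gser = bdiv (bvY * logX ^ 2 - bvX * logY ^ 2) (logX - logY)"

definition G :: "nat \<Rightarrow> nat \<Rightarrow> real" where
  "G m n = fps_nth (fps_nth Gser m) n"

definition Gt :: "nat \<Rightarrow> nat \<Rightarrow> real" where
  "Gt m n = G m n + (\<Sum>j = 0..<m - 1. G (n - 1) (j + 2) * G (m - j - 1) 2)"

end

theory Submission
  imports Defs
begin

text \<open>Let \<open>P = (y log(1+x) - x log(1+y)) / (log(1+x) - log(1+y))\<close>. Both numerator and
  denominator are divisible by \<open>x - y\<close>, and the quotient of the denominator by it has constant
  term 1, so \<open>P\<close> is a genuine power series, divisible by \<open>xy\<close> and symmetric in \<open>x, y\<close>.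
  The Gregory series splits as \<open>y log(1+x) + log(1+y) P = x log(1+y) + log(1+x) P\<close>, which
  makes it symmetric and identifies its coefficients with one index shifted with those of
  \<open>(log(1+y)/y) P\<close> and \<open>(log(1+x)/x) P\<close>. In particular \<open>G(k,2)\<close> is the coefficient of
  \<open>x y^k\<close> in \<open>P\<close>, and comparing coefficients of \<open>x\<close> in \<open>P (log(1+x) - log(1+y)) =
  y log(1+x) - x log(1+y)\<close> shows that this row \<open>P\<^sub>1(y)\<close> satisfies
  \<open>P\<^sub>1 log(1+y)/y = log(1+y)/y - 1\<close>. The convolution sum in \<open>Gt\<close> is a coefficient of
  \<open>(log(1+x)/x) P P\<^sub>1(x)\<close>, so the generating function of \<open>Gt(m,n+1)\<close> is
  \<open>P (log(1+x)/x + log(1+y)/y - 1)\<close>; its symmetry is the reciprocity law.\<close>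

unbundle fps_syntax

definition fps_swap :: "'a fps fps \<Rightarrow> 'a fps fps" where
  "fps_swap f = Abs_fps (\<lambda>i. Abs_fps (\<lambda>j. f $ j $ i))"

lemma fps_swap_nth [simp]: "fps_swap f $ i $ j = f $ j $ i"
  by (simp add: fps_swap_def)

lemma fps_swap_swap [simp]: "fps_swap (fps_swap f) = f"
  by (simp add: fps_eq_iff)

lemma fps_mult_nth_nth:
  fixes f g :: "'a::semiring_0 fps fps"
  shows "(f * g) $ i $ j = (\<Sum>a=0..i. \<Sum>b=0..j. f $ a $ b * g $ (i - a) $ (j - b))"
  by (simp add: fps_mult_nth fps_sum_nth)

lemma fps_swap_mult:
  fixes f g :: "'a::semiring_0 fps fps"
  shows "fps_swap (f * g) = fps_swap f * fps_swap g"
  by (intro fps_ext) (simp add: fps_mult_nth_nth, rule sum.swap)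

lemma fps_swap_add: "fps_swap (f + g) = fps_swap f + fps_swap g"
  by (simp add: fps_eq_iff)

lemma fps_swap_diff: "fps_swap (f - g) = fps_swap f - fps_swap g"
  by (simp add: fps_eq_iff)

lemma fps_swap_one: "fps_swap 1 = 1"
  by (simp add: fps_eq_iff)

lemma fps_swap_const_X: "fps_swap (fps_const fps_X) = fps_X"
  by (simp add: fps_eq_iff fps_X_def)

lemma fps_swap_const_nth: "fps_swap (fps_const c) $ k = fps_const (c $ k)"
  by (simp add: fps_eq_iff)

lemma fps_mult_swap_const_nth:
  fixes f :: "'a::semiring_0 fps fps"
  shows "(f * fps_swap (fps_const c)) $ m $ n = (\<Sum>i=0..m. f $ i $ n * c $ (m - i))"
  by (simp add: fps_mult_nth[of f] fps_sum_nth fps_swap_const_nth del: fps_swap_nth)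

text \<open>The divided difference \<open>(f(x) - f(y)) / (x - y)\<close>.\<close>
definition fps_divdiff :: "'a fps \<Rightarrow> 'a fps fps" where
  "fps_divdiff f = Abs_fps (\<lambda>i. Abs_fps (\<lambda>j. f $ (i + j + 1)))"

lemma fps_swap_const_diff_const:
  fixes f :: "'a::comm_ring_1 fps"
  shows "fps_swap (fps_const f) - fps_const f = (fps_X - fps_const fps_X) * fps_divdiff f"
proof (intro fps_ext)
  fix i j
  show "(fps_swap (fps_const f) - fps_const f) $ i $ j = ((fps_X - fps_const fps_X) * fps_divdiff f) $ i $ j"
    unfolding left_diff_distrib fps_sub_nth fps_X_mult_nth
    by (cases i; cases j) (simp_all add: fps_divdiff_def)
qed

lemma fps_divdiff_right_unit:
  fixes f :: "'a::field fps"
  assumes "f $ 1 \<noteq> 0"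
  shows "\<exists>U. 1 = fps_divdiff f * U"
proof -
  have "fps_divdiff f $ 0 dvd 1"
    using assms by (simp add: fps_divdiff_def)
  then show ?thesis
    by (metis dvdE fps_is_left_unit_iff_zeroth_is_left_unit)
qed

lemma bdiv_eqI:
  assumes "b \<noteq> 0" "h * b = a"
  shows "bdiv a b = h"
  unfolding bdiv_def
proof (rule the_equality)
  show "h * b = a" by fact
  fix h' assume "h' * b = a"
  with assms show "h' = h" by (metis mult_right_cancel)
qed

definition ln_over_X :: "real fps" where
  "ln_over_X = fps_shift 1 (fps_ln 1)"

abbreviation logY_over_Y :: "real fps fps" where
  "logY_over_Y \<equiv> fps_const ln_over_X"

abbreviation logX_over_X :: "real fps fps" where
  "logX_over_X \<equiv> fps_swap logY_over_Y"

lemma fps_ln_eq_X_mult: "fps_ln 1 = fps_X * ln_over_X"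
  by (rule fps_ext) (simp add: ln_over_X_def fps_ln_nth)

lemma ln_over_X_nth_0 [simp]: "ln_over_X $ 0 = 1"
  by (simp add: ln_over_X_def fps_ln_nth)

lemma logX_over_X_nth_0 [simp]: "logX_over_X $ 0 = 1"
  by (simp add: fps_eq_iff)

lemma fps_swap_bvY: "fps_swap bvY = bvX"
  by (simp add: bvX_def bvY_def fps_swap_const_X)

lemma fps_swap_bvX: "fps_swap bvX = bvY"
  by (simp flip: fps_swap_bvY)

lemma fps_swap_logY: "fps_swap logY = logX"
  by (simp add: fps_eq_iff logX_def logY_def)

lemma fps_swap_logX: "fps_swap logX = logY"
  by (simp flip: fps_swap_logY)

lemma logY_eq: "logY = bvY * logY_over_Y"
  by (simp add: logY_def bvY_def fps_ln_eq_X_mult)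

lemma logX_eq: "logX = bvX * logX_over_X"
  by (simp add: logY_eq fps_swap_mult fps_swap_bvY flip: fps_swap_logY)

lemma logX_diff_logY: "logX - logY = (bvX - bvY) * fps_divdiff (fps_ln 1)"
  unfolding bvX_def bvY_def logY_def fps_swap_logY[symmetric] by (rule fps_swap_const_diff_const)

lemma logX_diff_logY_nonzero: "logX - logY \<noteq> 0"
proof
  assume "logX - logY = 0"
  then have "(logX - logY) $ 0 $ 1 = 0" by simp
  then show False by (simp add: logX_def logY_def fps_ln_nth)
qed

lemma Y_logX_diff_X_logY_eq: "bvY * logX - bvX * logY = bvX * bvY * (bvX - bvY) * fps_divdiff ln_over_X"
proof -
  have "logX_over_X - logY_over_Y = (bvX - bvY) * fps_divdiff ln_over_X"
    unfolding bvX_def bvY_def by (rule fps_swap_const_diff_const)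
  moreover have "bvY * logX - bvX * logY = bvX * bvY * (logX_over_X - logY_over_Y)"
    by (simp add: logX_eq logY_eq algebra_simps)
  ultimately show ?thesis by (simp add: mult.assoc)
qed

definition Pser :: "real fps fps" where
  "Pser = bdiv (bvY * logX - bvX * logY) (logX - logY)"

lemma Pser_factor: "\<exists>W. Pser = bvX * bvY * W \<and> Pser * (logX - logY) = bvY * logX - bvX * logY"
proof -
  have "\<exists>U. 1 = fps_divdiff (fps_ln 1 :: real fps) * U"
    by (rule fps_divdiff_right_unit) (simp add: fps_ln_nth)
  then obtain U where U: "1 = fps_divdiff (fps_ln 1 :: real fps) * U" ..
  define W where "W = fps_divdiff ln_over_X * U"
  have "bvX * bvY * W * (logX - logY)
      = bvX * bvY * (bvX - bvY) * fps_divdiff ln_over_X * (fps_divdiff (fps_ln 1) * U)"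
    by (simp add: W_def logX_diff_logY algebra_simps)
  also have "\<dots> = bvY * logX - bvX * logY"
    by (simp add: Y_logX_diff_X_logY_eq flip: U)
  finally have W: "bvX * bvY * W * (logX - logY) = bvY * logX - bvX * logY" .
  then have "Pser = bvX * bvY * W"
    unfolding Pser_def by (rule bdiv_eqI[OF logX_diff_logY_nonzero])
  with W show ?thesis by auto
qed

lemma Pser_mult: "Pser * (logX - logY) = bvY * logX - bvX * logY"
  using Pser_factor by blast

lemma Pser_nth_0 [simp]: "Pser $ 0 = 0"
proof -
  obtain W where W: "Pser = bvX * (bvY * W)"
    using Pser_factor by (auto simp: mult.assoc)
  show ?thesis by (simp add: W bvX_def)
qed

lemma Pser_nth_nth_0 [simp]: "Pser $ m $ 0 = 0"
proof -
  obtain W where W: "Pser = bvY * (bvX * W)"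
    using Pser_factor by (auto simp: ac_simps)
  show ?thesis by (simp add: W bvY_def)
qed

lemma fps_swap_Pser: "fps_swap Pser = Pser"
proof -
  have "fps_swap Pser * (logY - logX) = bvX * logY - bvY * logX"
    using arg_cong[OF Pser_mult, of fps_swap]
    by (simp add: fps_swap_mult fps_swap_diff fps_swap_bvX fps_swap_bvY fps_swap_logX fps_swap_logY)
  then have "fps_swap Pser * (logX - logY) = bvY * logX - bvX * logY"
    by (metis minus_diff_eq mult_minus_right)
  then have "Pser = fps_swap Pser"
    unfolding Pser_def by (rule bdiv_eqI[OF logX_diff_logY_nonzero])
  then show ?thesis ..
qed

lemma quadratic_quotient_split:
  fixes a b x y p :: "'a::comm_ring_1"
  assumes "p * (a - b) = y * a - x * b"
  shows "(y * a + b * p) * (a - b) = y * a\<^sup>2 - x * b\<^sup>2"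
    and "(x * b + a * p) * (a - b) = y * a\<^sup>2 - x * b\<^sup>2"
proof -
  have "(y * a + b * p) * (a - b) = y * a * (a - b) + b * (p * (a - b))"
    by (simp add: algebra_simps)
  also have "\<dots> = y * a * (a - b) + b * (y * a - x * b)"
    by (simp only: assms)
  finally show "(y * a + b * p) * (a - b) = y * a\<^sup>2 - x * b\<^sup>2"
    by (simp add: algebra_simps power2_eq_square)
  have "(x * b + a * p) * (a - b) = x * b * (a - b) + a * (p * (a - b))"
    by (simp add: algebra_simps)
  also have "\<dots> = x * b * (a - b) + a * (y * a - x * b)"
    by (simp only: assms)
  finally show "(x * b + a * p) * (a - b) = y * a\<^sup>2 - x * b\<^sup>2"
    by (simp add: algebra_simps power2_eq_square)
qed

lemma Gser_eq_Y: "Gser = bvY * logX + logY * Pser"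
  unfolding Gser_def
  by (rule bdiv_eqI[OF logX_diff_logY_nonzero quadratic_quotient_split(1)[OF Pser_mult]])

lemma Gser_eq_X: "Gser = bvX * logY + logX * Pser"
  unfolding Gser_def
  by (rule bdiv_eqI[OF logX_diff_logY_nonzero quadratic_quotient_split(2)[OF Pser_mult]])

lemma fps_swap_Gser: "fps_swap Gser = Gser"
proof -
  have "fps_swap Gser = bvX * logY + logX * Pser"
    by (simp add: Gser_eq_Y fps_swap_add fps_swap_mult fps_swap_Pser
        fps_swap_bvY fps_swap_logX fps_swap_logY)
  then show ?thesis by (simp add: Gser_eq_X)
qed

lemma G_commute: "G m n = G n m"
  using fps_swap_nth[of Gser n m] by (simp add: fps_swap_Gser G_def)

lemma G_0_left: "G 0 n = 0"
  by (simp add: G_def Gser_eq_X bvX_def)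

lemma G_Suc_left: "G (Suc m) n = (logY + logX_over_X * Pser) $ m $ n"
proof -
  have G: "Gser = bvX * (logY + logX_over_X * Pser)"
    by (simp add: Gser_eq_X logX_eq algebra_simps)
  show ?thesis by (simp add: G_def G bvX_def)
qed

lemma G_Suc_right: "G m (Suc n) = (logX + logY_over_Y * Pser) $ m $ n"
proof -
  have G: "Gser = bvY * (logX + logY_over_Y * Pser)"
    by (simp add: Gser_eq_Y logY_eq algebra_simps)
  show ?thesis by (simp add: G_def G bvY_def)
qed

lemma G_1_right: "G m 1 = fps_ln 1 $ m"
  using G_Suc_right[of m 0] by (simp add: logX_def)

lemma logY_over_Y_Pser_nth:
  "(logY_over_Y * Pser) $ m $ n = (if 1 \<le> m \<and> 1 \<le> n then G m (n + 1) else 0)"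
  by (cases m; cases n) (simp_all add: G_Suc_right logX_def)

lemma logX_over_X_Pser_nth: "(logX_over_X * Pser) $ m $ n = (if m = 0 then 0 else G (m + 1) n)"
  by (cases m) (simp_all add: G_Suc_left logY_def)

lemma G_2_right: "G k 2 = Pser $ 1 $ k"
  using logX_over_X_Pser_nth[of 1 k] by (simp add: G_commute[of k] fps_mult_nth numeral_2_eq_2)

lemma Pser_1_mult: "Pser $ 1 * ln_over_X = ln_over_X - 1"
proof -
  have "(Pser * (logX - logY)) $ 1 = (bvY * logX - bvX * logY) $ 1"
    by (simp add: Pser_mult)
  then have "- (Pser $ 1 * fps_ln 1) = fps_X - fps_ln 1"
    by (simp add: fps_mult_nth[of Pser] bvX_def bvY_def logX_def logY_def fps_ln_nth)
  then have "fps_X * (Pser $ 1 * ln_over_X) = fps_X * (ln_over_X - 1)"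
    by (simp add: fps_ln_eq_X_mult algebra_simps)
  then show ?thesis by simp
qed

lemma sum_convolution_drop_ends:
  fixes a b :: "nat \<Rightarrow> 'a::semiring_0"
  assumes "a 0 = 0" "b 0 = 0"
  shows "(\<Sum>i=0..m. a i * b (m - i)) = (\<Sum>j=0..<m - 1. a (j + 1) * b (m - j - 1))"
proof (cases m)
  case (Suc k)
  have "(\<Sum>i=0..Suc k. a i * b (Suc k - i)) = (\<Sum>i=0..k. a (i + 1) * b (k - i))"
    unfolding sum.atLeast0_atMost_Suc_shift by (simp add: assms(1))
  also have "\<dots> = (\<Sum>i=0..<k. a (i + 1) * b (k - i))"
    by (simp add: assms(2) atLeastLessThanSuc_atLeastAtMost[symmetric])
  finally show ?thesis using Suc by simp
qed (simp add: assms)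

lemma Gt_correction_nth:
  "(logX_over_X * Pser * fps_swap (fps_const (Pser $ 1))) $ m $ n
     = (\<Sum>j=0..<m - 1. G n (j + 2) * G (m - j - 1) 2)"
  unfolding fps_mult_swap_const_nth
  by (subst sum_convolution_drop_ends)
     (simp_all add: logX_over_X_Pser_nth G_commute[of n] G_2_right G_0_left)

lemma Gt_series:
  "Abs_fps (\<lambda>m. Abs_fps (\<lambda>n. if 1 \<le> m \<and> 1 \<le> n then Gt m (n + 1) else 0))
     = Pser * (logX_over_X + logY_over_Y - 1)"
  (is "?F = _")
proof -
  define S where "S = fps_swap (fps_const (Pser $ 1))"
  have "?F = logY_over_Y * Pser + logX_over_X * Pser * S"
  proof (intro fps_ext)
    fix m n
    show "?F $ m $ n = (logY_over_Y * Pser + logX_over_X * Pser * S) $ m $ n"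
      unfolding S_def fps_add_nth logY_over_Y_Pser_nth Gt_correction_nth
      by (cases "m = 0"; cases "n = 0") (simp_all add: Gt_def G_0_left)
  qed
  also have "\<dots> = Pser * (logY_over_Y + S * logX_over_X)"
    by (simp add: algebra_simps)
  also have "S * logX_over_X = fps_swap (fps_const (Pser $ 1 * ln_over_X))"
    unfolding S_def by (simp only: fps_swap_mult flip: fps_const_mult)
  also have "\<dots> = logX_over_X - 1"
    unfolding Pser_1_mult by (simp add: fps_swap_diff fps_swap_one flip: fps_const_sub)
  finally show ?thesis by (simp add: algebra_simps)
qed

lemma bdiv_Y_logX_add_X_logY: "bdiv (bvY * logX + bvX * logY) (bvX * bvY) = logX_over_X + logY_over_Y"
  by (rule bdiv_eqI) (simp_all add: bvX_def bvY_def logX_eq logY_eq algebra_simps)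

theorem lemma4p5:
  shows "(\<forall>m\<ge>1. Gt m 1 = G m 1 \<and> G m 1 = (-1) ^ (m - 1) / real m)
    \<and> Abs_fps (\<lambda>m. Abs_fps (\<lambda>n. if 1 \<le> m \<and> 1 \<le> n then Gt m (n + 1) else 0))
        = bdiv (bvY * logX - bvX * logY) (logX - logY)
          * (bdiv (bvY * logX + bvX * logY) (bvX * bvY) - 1)
    \<and> (\<forall>m n. 1 \<le> m \<longrightarrow> 2 \<le> n \<longrightarrow> Gt m n = Gt (n - 1) (m + 1))"
proof (intro conjI allI impI)
  fix m :: nat assume "1 \<le> m"
  then show "Gt m 1 = G m 1" "G m 1 = (-1) ^ (m - 1) / real m"
    using G_1_right[of m] by (simp_all add: Gt_def G_0_left fps_ln_nth)
next
  show "Abs_fps (\<lambda>m. Abs_fps (\<lambda>n. if 1 \<le> m \<and> 1 \<le> n then Gt m (n + 1) else 0))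
        = bdiv (bvY * logX - bvX * logY) (logX - logY)
          * (bdiv (bvY * logX + bvX * logY) (bvX * bvY) - 1)"
    unfolding Gt_series bdiv_Y_logX_add_X_logY Pser_def ..
next
  fix m n :: nat assume "1 \<le> m" "2 \<le> n"
  then obtain k where n: "n = Suc (Suc k)"
    by (metis add_2_eq_Suc le_Suc_ex)
  have "fps_swap (Pser * (logX_over_X + logY_over_Y - 1)) = Pser * (logX_over_X + logY_over_Y - 1)"
    by (simp add: fps_swap_mult fps_swap_add fps_swap_diff fps_swap_one fps_swap_Pser algebra_simps)
  then have "fps_swap (Pser * (logX_over_X + logY_over_Y - 1)) $ m $ (n - 1)
      = (Pser * (logX_over_X + logY_over_Y - 1)) $ m $ (n - 1)" by simp
  with \<open>1 \<le> m\<close> show "Gt m n = Gt (n - 1) (m + 1)"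
    by (simp add: n flip: Gt_series)
qed

end
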